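(* Let $A$ be a complex vector space of countable dimension, and let $\mu\colon A^*\to A$ and $\nu\colon A^*\to A$ be linear maps such that $\alpha(\mu(\beta))=\beta(\nu(\alpha))$ for all $\alpha,\beta\in A^*$. Then $\mathrm{im}\,\mu$ and $\mathrm{im}\,\nu$ are finite-dimensional and $\dim\mathrm{im}\,\mu=\dim\mathrm{im}\,\nu$. *)

theory Defs
  imports Complex_Main "HOL-Library.Countable_Set"
begin

text \<open>A complex vector space is modelled as a type 'a with an abstract scalar
multiplication scale :: complex => 'a => 'a satisfying the vector_space locale.\<close>

definition dual_space :: "(complex \<Rightarrow> 'a::ab_group_add \<Rightarrow> 'a) \<Rightarrow> ('a \<Rightarrow> complex) set" where
  "dual_space scale = {f. Vector_Spaces.linear scale (*) f}"

definition linear_on_dual ::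
  "(complex \<Rightarrow> 'a::ab_group_add \<Rightarrow> 'a) \<Rightarrow> (('a \<Rightarrow> complex) \<Rightarrow> 'a) \<Rightarrow> bool" where
  "linear_on_dual scale m \<longleftrightarrow>
     (\<forall>f\<in>dual_space scale. \<forall>g\<in>dual_space scale. m (\<lambda>x. f x + g x) = m f + m g) \<and>
     (\<forall>c. \<forall>f\<in>dual_space scale. m (\<lambda>x. c * f x) = scale c (m f))"

definition countable_dimension :: "(complex \<Rightarrow> 'a::ab_group_add \<Rightarrow> 'a) \<Rightarrow> bool" where
  "countable_dimension scale \<longleftrightarrow>
     (\<exists>B. countable B \<and> \<not> module.dependent scale B \<and> module.span scale B = UNIV)"

definition finite_dim_set :: "(complex \<Rightarrow> 'a::ab_group_add \<Rightarrow> 'a) \<Rightarrow> 'a set \<Rightarrow> bool" where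
  "finite_dim_set scale S \<longleftrightarrow> (\<exists>B. finite B \<and> S \<subseteq> module.span scale B)"

end

theory Submission
  imports Defs "HOL-Analysis.Cartesian_Space" "HOL-Analysis.Continuum_Not_Denumerable"
begin

(* If im \<mu> were infinite-dimensional, choose independent vectors \<mu> \<beta>\<^sub>0, \<mu> \<beta>\<^sub>1, ... in it and,
   for every l \<in> \<complex>, a functional \<alpha>\<^sub>l with \<alpha>\<^sub>l (\<mu> \<beta>\<^sub>n) = l^n. Then \<beta>\<^sub>n (\<nu> \<alpha>\<^sub>l) = l^n, so by
   the Vandermonde argument the vectors \<nu> \<alpha>\<^sub>l form an uncountable independent family, which a
   space of countable dimension does not contain.
   If a functional \<alpha> vanishes on im \<mu>, then \<beta> (\<nu> \<alpha>) = \<alpha> (\<mu> \<beta>) = 0 for all \<beta>, so \<nu> \<alpha> = 0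
   because functionals separate points. Hence \<nu> \<alpha> depends only on the values of \<alpha> on a basis
   of im \<mu>, which gives dim im \<nu> \<le> dim im \<mu>; the hypothesis is symmetric in \<mu> and \<nu>. *)

lemma weighted_power_sums_eq_0_imp_eq_0:
  fixes c :: "'a::idom \<Rightarrow> 'a"
  assumes "finite S" "\<And>n. (\<Sum>x\<in>S. c x * x ^ n) = 0" "y \<in> S"
  shows "c y = 0"
  using assms
proof (induction S arbitrary: c y rule: finite_induct)
  case empty
  then show ?case by simp
next
  case (insert a S)
  have shifted: "(\<Sum>x\<in>S. c x * (x - a) * x ^ n) = 0" for n
  proof -
    have "(\<Sum>x\<in>S. c x * (x - a) * x ^ n)
        = (\<Sum>x\<in>insert a S. c x * x ^ Suc n) - a * (\<Sum>x\<in>insert a S. c x * x ^ n)"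
      using insert.hyps by (simp add: sum_distrib_left sum_subtractf[symmetric] algebra_simps)
    then show ?thesis using insert.prems(1)[of "Suc n"] insert.prems(1)[of n] by simp
  qed
  have "c x * (x - a) = 0" if "x \<in> S" for x
    using insert.IH[of "\<lambda>x. c x * (x - a)", OF shifted that] .
  then have S0: "c x = 0" if "x \<in> S" for x
    using that insert.hyps(2) by fastforce
  have "(\<Sum>x\<in>insert a S. c x * x ^ 0) = 0"
    using insert.prems(1) .
  then have "c a = 0"
    using insert.hyps S0 by simp
  then show ?case
    using insert.prems(2) S0 by auto
qed

context vector_space
begin

lemma in_span_finite_subset:
  assumes "x \<in> span B"
  obtains F where "finite F" "F \<subseteq> B" "x \<in> span F"
  using assms unfolding span_explicit[of B]
  by (blast intro: span_sum span_scale span_base)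

lemma countable_independent_in_span:
  assumes "countable B" "S \<subseteq> span B" "independent S"
  shows "countable S"
proof -
  have "\<forall>x\<in>S. \<exists>F. finite F \<and> F \<subseteq> B \<and> x \<in> span F"
    using in_span_finite_subset assms(2) by (metis subsetD)
  then obtain F where F: "\<And>x. x \<in> S \<Longrightarrow> finite (F x) \<and> F x \<subseteq> B \<and> x \<in> span (F x)"
    by metis
  have fibre_finite: "finite {x \<in> S. F x = T}" for T
  proof (cases "{x \<in> S. F x = T} = {}")
    case False
    then obtain x where "x \<in> S" "F x = T" by blast
    then have "finite T" using F by blast
    moreover have "independent {x \<in> S. F x = T}"
      by (rule independent_mono[OF assms(3)]) blast
    moreover have "{x \<in> S. F x = T} \<subseteq> span T" using F by auto
    ultimately show ?thesis
      by (blast dest: independent_span_bound)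
  qed (simp only: finite.emptyI)
  have "F ` S \<subseteq> {T. finite T \<and> T \<subseteq> B}"
    using F by blast
  then have "countable (F ` S)"
    using countable_Collect_finite_subset[OF assms(1)] by (rule countable_subset)
  then have "countable (\<Union>T\<in>F ` S. {x \<in> S. F x = T})"
    using fibre_finite by (intro countable_UN) (auto intro: countable_finite)
  moreover have "S = (\<Union>T\<in>F ` S. {x \<in> S. F x = T})" by blast
  ultimately show ?thesis by simp
qed

end

locale complex_vector_space = vector_space scale
  for scale :: "complex \<Rightarrow> 'a::ab_group_add \<Rightarrow> 'a"
begin

sublocale functional: vector_space_pair scale "(*) :: complex \<Rightarrow> complex \<Rightarrow> complex"
  using vector_space_axioms vector_space_over_itself.vector_space_axioms
  by (simp add: vector_space_pair_def)

lemma dual_space_zero: "(\<lambda>x. 0) \<in> dual_space scale"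
  by (simp add: dual_space_def functional.linear_zero)

lemma dual_space_diff:
  "f \<in> dual_space scale \<Longrightarrow> g \<in> dual_space scale \<Longrightarrow> (\<lambda>x. f x - g x) \<in> dual_space scale"
  by (simp add: dual_space_def functional.linear_compose_sub)

lemma dual_space_scale: "f \<in> dual_space scale \<Longrightarrow> (\<lambda>x. c * f x) \<in> dual_space scale"
  using functional.linear_compose_scale_right[of f c] by (simp add: dual_space_def)

lemma dual_space_sum:
  "(\<And>i. i \<in> I \<Longrightarrow> f i \<in> dual_space scale) \<Longrightarrow> (\<lambda>x. \<Sum>i\<in>I. c i * f i x) \<in> dual_space scale"
  using functional.linear_compose_sum[of I "\<lambda>i x. c i * f i x"] dual_space_scale
  by (simp add: dual_space_def)

lemma dual_space_extend:
  assumes "independent B"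
  shows "\<exists>g. g \<in> dual_space scale \<and> (\<forall>x\<in>B. g x = f x)"
  using functional.linear_independent_extend[OF assms, of f] by (auto simp: dual_space_def)

lemma dual_space_separates:
  assumes "x \<noteq> 0"
  obtains g where "g \<in> dual_space scale" "g x = 1"
  using dual_space_extend[of "{x}" "\<lambda>_. 1"] assms by auto

lemma linear_on_dual_add:
  "linear_on_dual scale m \<Longrightarrow> f \<in> dual_space scale \<Longrightarrow> g \<in> dual_space scale
    \<Longrightarrow> m (\<lambda>x. f x + g x) = m f + m g"
  by (simp add: linear_on_dual_def)

lemma linear_on_dual_scale:
  "linear_on_dual scale m \<Longrightarrow> f \<in> dual_space scale \<Longrightarrow> m (\<lambda>x. c * f x) = scale c (m f)"
  by (simp add: linear_on_dual_def)

lemma linear_on_dual_sum: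
  assumes "linear_on_dual scale m" "finite I" "\<And>i. i \<in> I \<Longrightarrow> f i \<in> dual_space scale"
  shows "m (\<lambda>x. \<Sum>i\<in>I. c i * f i x) = (\<Sum>i\<in>I. scale (c i) (m (f i)))"
  using assms(2,3)
proof (induction I rule: finite_induct)
  case empty
  show ?case
    using linear_on_dual_add[OF assms(1) dual_space_zero dual_space_zero] by simp
next
  case (insert a I)
  have "m (\<lambda>x. \<Sum>i\<in>insert a I. c i * f i x) = m (\<lambda>x. c a * f a x + (\<Sum>i\<in>I. c i * f i x))"
    using insert.hyps by simp
  also have "\<dots> = m (\<lambda>x. c a * f a x) + m (\<lambda>x. \<Sum>i\<in>I. c i * f i x)"
    using insert.prems by (intro linear_on_dual_add assms(1) dual_space_scale dual_space_sum) auto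
  also have "m (\<lambda>x. c a * f a x) = scale (c a) (m (f a))"
    using insert.prems by (simp add: linear_on_dual_scale assms(1))
  finally show ?case
    using insert by simp
qed

lemma power_functionals_exist:
  fixes w :: "nat \<Rightarrow> 'a"
  assumes "independent (range w)" "inj w"
  obtains \<alpha> where "\<And>l. \<alpha> l \<in> dual_space scale" "\<And>l n. \<alpha> l (w n) = l ^ n"
proof -
  have "\<forall>l. \<exists>\<alpha>. \<alpha> \<in> dual_space scale \<and> (\<forall>x\<in>range w. \<alpha> x = l ^ inv w x)"
    by (intro allI dual_space_extend[OF assms(1)])
  then obtain \<alpha> where "\<forall>l. \<alpha> l \<in> dual_space scale \<and> (\<forall>x\<in>range w. \<alpha> l x = l ^ inv w x)"
    by (rule choice[THEN exE])
  with assms(2) show thesis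
    by (intro that) auto
qed

lemma independent_if_power_functionals:
  fixes v :: "complex \<Rightarrow> 'a"
  assumes "\<And>n. \<phi> n \<in> dual_space scale" "\<And>n l. \<phi> n (v l) = l ^ n"
  shows "inj v" "independent (range v)"
proof -
  show "inj v"
    by (rule injI) (metis assms(2) power_one_right)
  show "independent (range v)"
    unfolding independent_explicit_module
  proof (intro allI impI)
    fix T u y
    assume T: "finite T" "T \<subseteq> range v" "(\<Sum>x\<in>T. scale (u x) x) = 0" "y \<in> T"
    obtain L where L: "T = v ` L" using T(2) by (meson subset_image_iff)
    with T(1) \<open>inj v\<close> have "finite L" by (simp add: finite_image_iff inj_on_subset)
    have "(\<Sum>l\<in>L. u (v l) * l ^ n) = 0" for n
    proof -
      interpret \<phi>: Vector_Spaces.linear scale "(*)" "\<phi> n"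
        using assms(1) by (simp add: dual_space_def)
      have "(\<Sum>x\<in>T. u x * \<phi> n x) = \<phi> n (\<Sum>x\<in>T. scale (u x) x)"
        by (simp add: \<phi>.sum \<phi>.scale)
      then have "(\<Sum>x\<in>T. u x * \<phi> n x) = 0"
        using T(3) \<phi>.zero by simp
      then show ?thesis
        using L \<open>inj v\<close> by (simp add: sum.reindex inj_on_subset assms(2))
    qed
    moreover obtain l where "l \<in> L" "y = v l"
      using L T(4) by blast
    ultimately show "u y = 0"
      using weighted_power_sums_eq_0_imp_eq_0[OF \<open>finite L\<close>, of "\<lambda>l. u (v l)"] by blast
  qed
qed

lemma finite_dim_set_image_if_paired:
  assumes "countable_dimension scale"
    and pair: "\<forall>\<alpha>\<in>dual_space scale. \<forall>\<beta>\<in>dual_space scale. \<alpha> (\<mu> \<beta>) = \<beta> (\<nu> \<alpha>)"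
  shows "finite_dim_set scale (\<mu> ` dual_space scale)"
proof (rule ccontr)
  assume infinite_dim: "\<not> finite_dim_set scale (\<mu> ` dual_space scale)"
  obtain B where B: "B \<subseteq> \<mu> ` dual_space scale" "independent B" "\<mu> ` dual_space scale \<subseteq> span B"
    using maximal_independent_subset by blast
  with infinite_dim have "infinite B"
    unfolding finite_dim_set_def by blast
  then obtain w :: "nat \<Rightarrow> 'a" where w: "inj w" "range w \<subseteq> B"
    using infinite_countable_subset by blast
  have "w n \<in> \<mu> ` dual_space scale" for n
    using w(2) B(1) by blast
  then have "\<forall>n. \<exists>\<beta>. \<beta> \<in> dual_space scale \<and> \<mu> \<beta> = w n"
    by (metis imageE)
  then obtain \<beta> where "\<forall>n. \<beta> n \<in> dual_space scale \<and> \<mu> (\<beta> n) = w n"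
    by (rule choice[THEN exE])
  then have \<beta>: "\<And>n. \<beta> n \<in> dual_space scale" "\<And>n. \<mu> (\<beta> n) = w n"
    by blast+
  obtain \<alpha> where \<alpha>: "\<And>l. \<alpha> l \<in> dual_space scale" "\<And>l n. \<alpha> l (w n) = l ^ n"
    using power_functionals_exist independent_mono[OF B(2) w(2)] w(1) by blast
  have "\<beta> n (\<nu> (\<alpha> l)) = \<alpha> l (\<mu> (\<beta> n))" for n l
    by (simp add: pair[rule_format, OF \<alpha>(1) \<beta>(1)])
  also have "\<alpha> l (\<mu> (\<beta> n)) = l ^ n" for n l
    by (simp add: \<alpha>(2) \<beta>(2))
  finally have power: "\<beta> n (\<nu> (\<alpha> l)) = l ^ n" for n l .
  have inj: "inj (\<lambda>l. \<nu> (\<alpha> l))" and indep: "independent (range (\<lambda>l. \<nu> (\<alpha> l)))"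
    using independent_if_power_functionals[OF \<beta>(1) power] by blast+
  obtain C where "countable C" "span C = UNIV"
    using \<open>countable_dimension scale\<close> unfolding countable_dimension_def by blast
  then have "countable (range (\<lambda>l. \<nu> (\<alpha> l)))"
    using countable_independent_in_span[OF \<open>countable C\<close> _ indep] by simp
  then have "countable (UNIV :: complex set)"
    using inj by (rule countable_image_inj_on)
  then show False
    using uncountable_UNIV_complex by blast
qed

lemma paired_map_eq_0_on_annihilator:
  assumes pair: "\<forall>\<alpha>\<in>dual_space scale. \<forall>\<beta>\<in>dual_space scale. \<alpha> (\<mu> \<beta>) = \<beta> (\<nu> \<alpha>)"
    and "\<alpha> \<in> dual_space scale" "\<And>\<beta>. \<beta> \<in> dual_space scale \<Longrightarrow> \<alpha> (\<mu> \<beta>) = 0"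
  shows "\<nu> \<alpha> = 0"
proof (rule ccontr)
  assume "\<nu> \<alpha> \<noteq> 0"
  then obtain \<beta> where "\<beta> \<in> dual_space scale" "\<beta> (\<nu> \<alpha>) = 1"
    by (rule dual_space_separates)
  with assms show False by force
qed

lemma dim_image_le_if_paired:
  assumes "linear_on_dual scale \<nu>"
    and pair: "\<forall>\<alpha>\<in>dual_space scale. \<forall>\<beta>\<in>dual_space scale. \<alpha> (\<mu> \<beta>) = \<beta> (\<nu> \<alpha>)"
    and "finite_dim_set scale (\<mu> ` dual_space scale)"
  shows "dim (\<nu> ` dual_space scale) \<le> dim (\<mu> ` dual_space scale)"
proof -
  obtain B where B: "B \<subseteq> \<mu> ` dual_space scale" "independent B" "\<mu> ` dual_space scale \<subseteq> span B"
    using maximal_independent_subset by blast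
  obtain F where "finite F" "\<mu> ` dual_space scale \<subseteq> span F"
    using assms(3) unfolding finite_dim_set_def by blast
  with B have "finite B"
    using independent_span_bound[OF \<open>finite F\<close> B(2)] by blast
  have "\<forall>b. \<exists>e. e \<in> dual_space scale \<and> (\<forall>x\<in>B. e x = (if x = b then 1 else 0))"
    by (intro allI dual_space_extend[OF B(2)])
  then obtain e where "\<forall>b. e b \<in> dual_space scale \<and> (\<forall>x\<in>B. e b x = (if x = b then 1 else 0))"
    by (rule choice[THEN exE])
  then have e: "\<And>b. e b \<in> dual_space scale" "\<And>b x. x \<in> B \<Longrightarrow> e b x = (if x = b then 1 else 0)"
    by blast+
  have "\<nu> ` dual_space scale \<subseteq> span ((\<lambda>b. \<nu> (e b)) ` B)"
  proof
    fix y assume "y \<in> \<nu> ` dual_space scale"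
    then obtain \<alpha> where \<alpha>: "\<alpha> \<in> dual_space scale" "y = \<nu> \<alpha>" by blast
    define s where "s x = (\<Sum>b\<in>B. \<alpha> b * e b x)" for x
    have s: "s \<in> dual_space scale"
      unfolding s_def by (rule dual_space_sum) (rule e(1))
    have rest: "(\<lambda>x. \<alpha> x - s x) \<in> dual_space scale"
      using \<alpha>(1) s by (rule dual_space_diff)
    have "s x = \<alpha> x" if "x \<in> B" for x
      using that \<open>finite B\<close> by (simp add: s_def e(2) if_distrib cong: if_cong)
    then have "\<alpha> x - s x = 0" if "x \<in> span B" for x
      using functional.linear_eq_0_on_span[of "\<lambda>x. \<alpha> x - s x" B x] rest that
      by (simp add: dual_space_def)
    then have "\<nu> (\<lambda>x. \<alpha> x - s x) = 0"
      using B(3) by (intro paired_map_eq_0_on_annihilator[OF pair rest]) blast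
    moreover have "\<nu> \<alpha> = \<nu> (\<lambda>x. \<alpha> x - s x) + \<nu> s"
      using linear_on_dual_add[OF assms(1) rest s] by simp
    moreover have "\<nu> s = (\<Sum>b\<in>B. scale (\<alpha> b) (\<nu> (e b)))"
      unfolding s_def using linear_on_dual_sum[OF assms(1) \<open>finite B\<close>] e(1) by blast
    ultimately show "y \<in> span ((\<lambda>b. \<nu> (e b)) ` B)"
      using \<alpha>(2) by (simp add: span_sum span_scale span_base)
  qed
  then have "dim (\<nu> ` dual_space scale) \<le> card ((\<lambda>b. \<nu> (e b)) ` B)"
    using dim_le_card \<open>finite B\<close> by blast
  also have "\<dots> \<le> card B"
    using \<open>finite B\<close> by (rule card_image_le)
  also have "\<dots> = dim (\<mu> ` dual_space scale)"
    using dim_unique[OF B(1) B(3) B(2)] by simp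
  finally show ?thesis .
qed

end

theorem lemmaA1:
  fixes scale :: "complex \<Rightarrow> 'a::ab_group_add \<Rightarrow> 'a"
    and \<mu> \<nu> :: "('a \<Rightarrow> complex) \<Rightarrow> 'a"
  assumes "vector_space scale"
    and "countable_dimension scale"
    and "linear_on_dual scale \<mu>"
    and "linear_on_dual scale \<nu>"
    and "\<forall>\<alpha>\<in>dual_space scale. \<forall>\<beta>\<in>dual_space scale. \<alpha> (\<mu> \<beta>) = \<beta> (\<nu> \<alpha>)"
  shows "finite_dim_set scale (\<mu> ` dual_space scale)
       \<and> finite_dim_set scale (\<nu> ` dual_space scale)
       \<and> vector_space.dim scale (\<mu> ` dual_space scale) = vector_space.dim scale (\<nu> ` dual_space scale)"
proof -
  interpret complex_vector_space scale
    by (rule complex_vector_space.intro) fact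
  have pair_swapped: "\<forall>\<alpha>\<in>dual_space scale. \<forall>\<beta>\<in>dual_space scale. \<alpha> (\<nu> \<beta>) = \<beta> (\<mu> \<alpha>)"
    using assms(5) by metis
  have "finite_dim_set scale (\<mu> ` dual_space scale)" "finite_dim_set scale (\<nu> ` dual_space scale)"
    using finite_dim_set_image_if_paired assms(2,5) pair_swapped by blast+
  moreover have "dim (\<nu> ` dual_space scale) \<le> dim (\<mu> ` dual_space scale)"
    using dim_image_le_if_paired assms(4,5) calculation(1) by blast
  moreover have "dim (\<mu> ` dual_space scale) \<le> dim (\<nu> ` dual_space scale)"
    using dim_image_le_if_paired assms(3) pair_swapped calculation(2) by blast
  ultimately show ?thesis by simp
qed

end
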